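(* Let $p$ be a prime with $p\equiv 1$ or $7\pmod 8$, and let $\mathfrak{p}$ be a prime ideal of $\mathbb{Z}[\sqrt2]$ lying over $p$. Let $(a_p,b_p)$ be the solution of $a^2-2b^2=p$ in positive integers with $a_p$ minimal. Then $$\lambda_1\big(\Sigma_{\mathbb{Q}(\sqrt2)}(\mathfrak{p})\big)=\sqrt{2}\,\min\left(\sqrt{2a_p^2-p},\ \sqrt{6a_p^2-4\sqrt2\,a_p\sqrt{a_p^2-p}-3p}\right).$$
   Context: The canonical embedding of $\mathbb{Q}(\sqrt2)$ is $\Sigma_{\mathbb{Q}(\sqrt2)}(x)=(x,\tau(x))$, where $\tau(\sqrt2)=-\sqrt2$, with $\|\Sigma_{\mathbb{Q}(\sqrt2)}(x)\|^2=x^2+\tau(x)^2$. For a nonzero ideal $I$, $\lambda_1(\Sigma_{\mathbb{Q}(\sqrt2)}(I))=\min_{0\ne x\in I}\|\Sigma_{\mathbb{Q}(\sqrt2)}(x)\|$. *)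

theory Defs
  imports Complex_Main "HOL-Computational_Algebra.Primes"
begin

text \<open>Elements of \<open>\<int>[\<surd>2]\<close> are represented as pairs (x, y) standing for x + y\<surd>2.\<close>

type_synonym zsqrt2 = "int \<times> int"

definition zs_mult :: "zsqrt2 \<Rightarrow> zsqrt2 \<Rightarrow> zsqrt2" where
  "zs_mult u v = (fst u * fst v + 2 * snd u * snd v, fst u * snd v + snd u * fst v)"

definition zs_add :: "zsqrt2 \<Rightarrow> zsqrt2 \<Rightarrow> zsqrt2" where
  "zs_add u v = (fst u + fst v, snd u + snd v)"

definition zs_ideal :: "zsqrt2 set \<Rightarrow> bool" where
  "zs_ideal I \<longleftrightarrow> (0, 0) \<in> I \<and> (\<forall>u\<in>I. \<forall>v\<in>I. zs_add u v \<in> I)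
     \<and> (\<forall>r. \<forall>u\<in>I. zs_mult r u \<in> I)"

definition zs_prime_ideal :: "zsqrt2 set \<Rightarrow> bool" where
  "zs_prime_ideal P \<longleftrightarrow> zs_ideal P \<and> P \<noteq> UNIV
     \<and> (\<forall>u v. zs_mult u v \<in> P \<longrightarrow> u \<in> P \<or> v \<in> P)"

definition lies_over :: "zsqrt2 set \<Rightarrow> int \<Rightarrow> bool" where
  "lies_over P p \<longleftrightarrow> {n. (n, 0) \<in> P} = {n. p dvd n}"

definition canon_emb :: "zsqrt2 \<Rightarrow> real \<times> real" where
  "canon_emb u = (of_int (fst u) + of_int (snd u) * sqrt 2, of_int (fst u) - of_int (snd u) * sqrt 2)"

definition emb_norm :: "zsqrt2 \<Rightarrow> real" where
  "emb_norm u = sqrt ((fst (canon_emb u))\<^sup>2 + (snd (canon_emb u))\<^sup>2)"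

definition lambda1 :: "zsqrt2 set \<Rightarrow> real" where
  "lambda1 I = Inf {emb_norm u | u. u \<in> I \<and> u \<noteq> (0, 0)}"

definition a_min :: "int \<Rightarrow> int" where
  "a_min p = (LEAST a::int. a > 0 \<and> (\<exists>b::int. b > 0 \<and> a\<^sup>2 - 2 * b\<^sup>2 = p))"

end

theory Submission
  imports Defs "HOL-Number_Theory.Gauss" "HOL-Library.Discrete_Functions"
begin

(* Put Q(x + y sqrt 2) = x^2 + 2 y^2, so that the embedded length of u is sqrt (2 Q(u)).
   Since 2 is a square mod p, Thue's lemma yields p = a^2 - 2 b^2; for the minimal solution,
   a >= 2 b.  With s = a + b sqrt 2, the product s * conj s = p lies in the prime ideal P,
   so P contains s or conj s, and an element of norm p in an ideal meeting Z in pZ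
   generates it.  Up to conjugation, P = s Z[sqrt 2].
   For u = x + y sqrt 2 and v = x' + y' sqrt 2 the identity Q(u v) = Q(u) Q(v) + 8 x y x' y'
   gives Q(u v) >= Q(u) whenever x y x' y' >= 0 and v <> 0.  For w = x + y sqrt 2 <> 0 either
   x y >= 0, and Q(s w) >= Q(s); or s w = (s (sqrt 2 - 1)) (w (1 + sqrt 2)) is again such a
   product, and Q(s w) >= Q(s (sqrt 2 - 1)); or else |N(w)| >= 3, and then
   Q(s w) >= |N(s w)| >= 3 p >= Q(s).  Both bounds are attained. *)

definition zs_norm :: "zsqrt2 \<Rightarrow> int" where
  "zs_norm u = (fst u)\<^sup>2 - 2 * (snd u)\<^sup>2"

definition zs_quad :: "zsqrt2 \<Rightarrow> int" where
  "zs_quad u = (fst u)\<^sup>2 + 2 * (snd u)\<^sup>2"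

definition zs_cnj :: "zsqrt2 \<Rightarrow> zsqrt2" where
  "zs_cnj u = (fst u, - snd u)"

lemma zs_mult_comm: "zs_mult u v = zs_mult v u"
  by (simp add: zs_mult_def algebra_simps)

lemma zs_mult_assoc: "zs_mult (zs_mult u v) w = zs_mult u (zs_mult v w)"
  by (simp add: zs_mult_def algebra_simps)

lemma zs_norm_mult: "zs_norm (zs_mult u v) = zs_norm u * zs_norm v"
  by (simp add: zs_norm_def zs_mult_def power2_eq_square algebra_simps)

lemma zs_cnj_mult: "zs_cnj (zs_mult u v) = zs_mult (zs_cnj u) (zs_cnj v)"
  by (simp add: zs_cnj_def zs_mult_def)

lemma zs_cnj_cnj [simp]: "zs_cnj (zs_cnj u) = u"
  by (simp add: zs_cnj_def)

lemma zs_cnj_eq_0_iff [simp]: "zs_cnj u = (0, 0) \<longleftrightarrow> u = (0, 0)"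
  by (cases u) (simp add: zs_cnj_def)

lemma zs_norm_cnj [simp]: "zs_norm (zs_cnj u) = zs_norm u"
  by (simp add: zs_norm_def zs_cnj_def)

lemma zs_quad_cnj [simp]: "zs_quad (zs_cnj u) = zs_quad u"
  by (simp add: zs_quad_def zs_cnj_def)

lemma zs_mult_cnj_self: "zs_mult u (zs_cnj u) = (zs_norm u, 0)"
  by (simp add: zs_mult_def zs_cnj_def zs_norm_def power2_eq_square)

lemma abs_zs_norm_le_zs_quad: "\<bar>zs_norm u\<bar> \<le> zs_quad u"
  by (simp add: zs_norm_def zs_quad_def abs_le_iff)

lemma zs_quad_pos: "u \<noteq> (0, 0) \<Longrightarrow> 0 < zs_quad u"
  by (cases u) (auto simp: zs_quad_def add_nonneg_pos add_pos_nonneg)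

lemma zs_quad_mult:
  "zs_quad (zs_mult u v) = zs_quad u * zs_quad v + 8 * (fst u * snd u) * (fst v * snd v)"
  by (simp add: zs_quad_def zs_mult_def power2_eq_square algebra_simps)

lemma zs_quad_le_mult:
  assumes "0 \<le> (fst u * snd u) * (fst v * snd v)" and "v \<noteq> (0, 0)"
  shows "zs_quad u \<le> zs_quad (zs_mult u v)"
proof -
  have "zs_quad u * 1 \<le> zs_quad u * zs_quad v"
    using zs_quad_pos[OF assms(2)] by (intro mult_left_mono) (simp_all add: zs_quad_def)
  then show ?thesis
    using assms(1) by (simp add: zs_quad_mult)
qed

lemma emb_norm_eq_sqrt_zs_quad: "emb_norm u = sqrt (2 * of_int (zs_quad u))"
proof -
  have parallelogram: "(X + Y)\<^sup>2 + (X - Y)\<^sup>2 = 2 * X\<^sup>2 + 2 * Y\<^sup>2" for X Y :: real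
    by (simp add: power2_eq_square algebra_simps)
  show ?thesis
    unfolding emb_norm_def canon_emb_def zs_quad_def fst_conv snd_conv parallelogram
    by (simp add: power_mult_distrib)
qed

lemma emb_norm_cnj [simp]: "emb_norm (zs_cnj u) = emb_norm u"
  by (simp add: emb_norm_eq_sqrt_zs_quad)

lemma square_eq_double_square_imp_zero:
  fixes x y :: int
  assumes "x\<^sup>2 = 2 * y\<^sup>2"
  shows "y = 0"
  using assms
proof (induction "nat \<bar>y\<bar>" arbitrary: x y rule: less_induct)
  case less
  have "even (x\<^sup>2)"
    using less.prems by simp
  then obtain x' where x': "x = 2 * x'"
    by (auto elim: evenE)
  then have y2: "y\<^sup>2 = 2 * x'\<^sup>2"
    using less.prems by (simp add: power2_eq_square)
  then have "even (y\<^sup>2)"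
    by simp
  then obtain y' where y': "y = 2 * y'"
    by (auto elim: evenE)
  have x'2: "x'\<^sup>2 = 2 * y'\<^sup>2"
    using y2 by (simp add: y' power2_eq_square)
  show "y = 0"
  proof (rule ccontr)
    assume "y \<noteq> 0"
    then have "nat \<bar>y'\<bar> < nat \<bar>y\<bar>"
      using y' by simp
    then have "y' = 0"
      using less.hyps x'2 by blast
    then show False
      using \<open>y \<noteq> 0\<close> y' by simp
  qed
qed

lemma prime_neq_square: "prime (p::int) \<Longrightarrow> p \<noteq> k\<^sup>2"
  using prime_power_iff[of k 2] by auto

lemma thue_lemma:
  fixes m c :: int
  assumes "0 < m"
  shows "\<exists>x z. (x, z) \<noteq> (0, 0) \<and> x\<^sup>2 \<le> m \<and> z\<^sup>2 \<le> m \<and> [x = c * z] (mod m)"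
proof -
  define k where "k = int (floor_sqrt (nat m))"
  have "int ((floor_sqrt (nat m))\<^sup>2) \<le> int (nat m)" "int (nat m) < int ((Suc (floor_sqrt (nat m)))\<^sup>2)"
    using floor_sqrt_power2_le Suc_floor_sqrt_power2_gt by (simp_all only: of_nat_le_iff of_nat_less_iff)
  then have k: "0 \<le> k" "k\<^sup>2 \<le> m" "m < (k + 1)\<^sup>2"
    using assms by (simp_all add: k_def add.commute)
  define S where "S = {0..k} \<times> {0..k}"
  define f where "f = (\<lambda>(u, v). (u - c * v) mod m)"
  have "f ` S \<subseteq> {0..<m}"
    using assms by (auto simp: f_def)
  then have "card (f ` S) \<le> nat m"
    using card_mono[of "{0..<m}" "f ` S"] by simp
  also have "nat m < nat (k + 1) * nat (k + 1)"
    using k by (simp add: power2_eq_square flip: nat_mult_distrib)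
  also have "\<dots> = card S"
    by (simp add: S_def card_cartesian_product)
  finally have "\<not> inj_on f S"
    by (rule pigeonhole)
  then obtain u1 v1 u2 v2 where
    uv: "(u1, v1) \<in> S" "(u2, v2) \<in> S" "(u1, v1) \<noteq> (u2, v2)" "f (u1, v1) = f (u2, v2)"
    unfolding inj_on_def by auto
  have "[u1 - c * v1 = u2 - c * v2] (mod m)"
    using uv(4) by (simp add: f_def cong_def)
  then have "[u1 - u2 = c * (v1 - v2)] (mod m)"
    by (simp add: cong_iff_dvd_diff algebra_simps)
  moreover have "(u1 - u2)\<^sup>2 \<le> m" "(v1 - v2)\<^sup>2 \<le> m"
    using uv(1,2) k abs_le_square_iff[of "u1 - u2" k] abs_le_square_iff[of "v1 - v2" k]
    by (auto simp: S_def)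
  ultimately show ?thesis
    using uv(3) by (intro exI[of _ "u1 - u2"] exI[of _ "v1 - v2"]) auto
qed

lemma two_quadratic_residue:
  fixes p :: nat
  assumes p: "prime p" and p_mod_8: "p mod 8 = 1 \<or> p mod 8 = 7"
  shows "QuadRes (int p) 2"
proof -
  have p_gt_2: "2 < p"
    using p_mod_8 prime_gt_1_nat[OF p] by (cases "p = 2") auto
  have "\<not> int p dvd 2"
    using p_gt_2 by (metis int_dvd_int_iff nat_dvd_not_less of_nat_numeral zero_less_numeral)
  then have "[2 \<noteq> 0] (mod int p)"
    by (simp add: cong_0_iff)
  then interpret G: GAUSS p 2
    using p p_gt_2 by unfold_locales auto
  define h where "h = (int p - 1) div 2"
  have A: "G.A = {0<..h}"
    by (simp add: G.A_def h_def)
  have "G.C = (\<lambda>x. 2 * x) ` G.A"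
  proof -
    have "x * 2 mod int p = 2 * x" if "x \<in> G.A" for x
      using that by (auto simp: A h_def)
    then show ?thesis
      unfolding G.C_def G.B_def image_image by (intro image_cong) (auto simp: mult.commute)
  qed
  then have "G.E = (\<lambda>x. 2 * x) ` {h div 2 + 1 .. h}"
    unfolding G.E_def A h_def by auto
  then have card_E: "card G.E = nat (h - h div 2)"
    by (simp add: card_image inj_on_def)
  obtain m where "p = 8 * m + 1 \<or> p = 8 * m + 7"
    using p_mod_8 by (metis div_mod_decomp mult.commute)
  then have "h - h div 2 = 2 * int m \<or> h - h div 2 = 2 * (int m + 1)"
    by (auto simp: h_def)
  then have "even (card G.E)"
    unfolding card_E by (auto simp: even_nat_iff)
  then have "Legendre 2 (int p) = 1"
    using G.gauss_lemma by simp
  then show ?thesis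
    by (simp add: Legendre_def split: if_splits)
qed

lemma sq_minus_double_sq_eq_prime_nonzero:
  fixes p x y :: int
  assumes "prime p" and "x\<^sup>2 - 2 * y\<^sup>2 = p"
  shows "x \<noteq> 0" and "y \<noteq> 0"
proof -
  show "x \<noteq> 0"
    using assms prime_gt_0_int[OF assms(1)] by (auto simp: not_less)
  show "y \<noteq> 0"
    using assms prime_neq_square[OF assms(1), of x] by auto
qed

lemma prime_eq_sq_minus_double_sq:
  fixes p :: int
  assumes p: "prime p" and p_mod_8: "p mod 8 = 1 \<or> p mod 8 = 7"
  shows "\<exists>a b. 0 < a \<and> 0 < b \<and> a\<^sup>2 - 2 * b\<^sup>2 = p"
proof -
  have p_pos: "0 < p"
    using prime_gt_0_int[OF p] .
  have "nat p mod 8 = nat (p mod 8)"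
    using p_pos by (simp add: nat_mod_distrib)
  then have "nat p mod 8 = 1 \<or> nat p mod 8 = 7"
    using p_mod_8 by auto
  then have "QuadRes p 2"
    using two_quadratic_residue[of "nat p"] p p_pos by simp
  then obtain c where c: "[c\<^sup>2 = 2] (mod p)"
    by (auto simp: QuadRes_def)
  obtain x z where xz: "(x, z) \<noteq> (0, 0)" "x\<^sup>2 \<le> p" "z\<^sup>2 \<le> p" "[x = c * z] (mod p)"
    using thue_lemma[OF p_pos] by blast
  have "x\<^sup>2 < p" "z\<^sup>2 < p"
    using xz(2,3) prime_neq_square[OF p] by (auto simp: order.order_iff_strict)
  have "[x\<^sup>2 = c\<^sup>2 * z\<^sup>2] (mod p)"
    using cong_pow[OF xz(4), of 2] by (simp add: power_mult_distrib)
  also have "[c\<^sup>2 * z\<^sup>2 = 2 * z\<^sup>2] (mod p)"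
    using cong_mult[OF c cong_refl] .
  finally obtain k where k: "x\<^sup>2 - 2 * z\<^sup>2 = p * k"
    by (auto simp: cong_iff_dvd_diff)
  have "x\<^sup>2 - 2 * z\<^sup>2 \<noteq> 0"
    using xz(1) square_eq_double_square_imp_zero[of x z] by auto
  moreover have "p * k < p * 1" "p * (- 2) < p * k"
    using k \<open>x\<^sup>2 < p\<close> \<open>z\<^sup>2 < p\<close> zero_le_power2[of x] zero_le_power2[of z] by linarith+
  then have "k < 1" "- 2 < k"
    using p_pos by (simp_all only: mult_less_cancel_left_pos)
  ultimately have "k = -1"
    using k by fastforce
  \<comment> \<open>multiplying \<open>x + z\<surd>2\<close>, of norm \<open>-p\<close>, by the unit \<open>1 + \<surd>2\<close>\<close>
  then have "(x + 2 * z)\<^sup>2 - 2 * (x + z)\<^sup>2 = p"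
    using k by (simp add: power2_eq_square algebra_simps)
  then have "\<bar>x + 2 * z\<bar>\<^sup>2 - 2 * \<bar>x + z\<bar>\<^sup>2 = p"
    by simp
  moreover from this have "0 < \<bar>x + 2 * z\<bar>" "0 < \<bar>x + z\<bar>"
    using sq_minus_double_sq_eq_prime_nonzero[OF p] by auto
  ultimately show ?thesis
    by blast
qed

lemma a_min_spec:
  fixes p :: int
  assumes "0 < a" "0 < b" "a\<^sup>2 - 2 * b\<^sup>2 = p"
  shows "0 < a_min p" and "\<exists>b > 0. (a_min p)\<^sup>2 - 2 * b\<^sup>2 = p" and "a_min p \<le> a"
proof -
  define R where "R a \<longleftrightarrow> 0 < a \<and> (\<exists>b::int. 0 < b \<and> a\<^sup>2 - 2 * b\<^sup>2 = p)" for a :: int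
  have "R (int (nat a))"
    using assms by (auto simp: R_def)
  then obtain n where n: "R (int n)" "\<And>m. m < n \<Longrightarrow> \<not> R (int m)"
    using exists_least_iff[of "\<lambda>n. R (int n)"] by blast
  have least: "int n \<le> a'" if "R a'" for a'
    using that n(2)[of "nat a'"] by (cases "nat a' < n") (auto simp: R_def)
  have "a_min p = int n"
    unfolding a_min_def R_def[symmetric] using n(1) least by (rule Least_equality)
  moreover have "R a"
    using assms by (auto simp: R_def)
  ultimately show "0 < a_min p" "\<exists>b > 0. (a_min p)\<^sup>2 - 2 * b\<^sup>2 = p" "a_min p \<le> a"
    using n(1) least[of a] by (simp_all add: R_def)
qed

lemma minimal_solution_ge_double:
  fixes p a b :: int
  assumes p: "prime p" and ab: "0 < a" "0 < b" "a\<^sup>2 - 2 * b\<^sup>2 = p"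
    and minimal: "\<And>a' b'. 0 < a' \<Longrightarrow> 0 < b' \<Longrightarrow> a'\<^sup>2 - 2 * b'\<^sup>2 = p \<Longrightarrow> a \<le> a'"
  shows "2 * b \<le> a"
proof -
  \<comment> \<open>\<open>(3a - 4b) + (3b - 2a)\<surd>2 = (a + b\<surd>2)(3 - 2\<surd>2)\<close>, and \<open>3 - 2\<surd>2\<close> has norm 1\<close>
  have "(3 * a - 4 * b)\<^sup>2 - 2 * (3 * b - 2 * a)\<^sup>2 = p"
    using ab(3) by (simp add: power2_eq_square algebra_simps)
  moreover have "3 * a - 4 * b \<noteq> 0" "3 * b - 2 * a \<noteq> 0"
    using sq_minus_double_sq_eq_prime_nonzero[OF p \<open>(3 * a - 4 * b)\<^sup>2 - 2 * (3 * b - 2 * a)\<^sup>2 = p\<close>] .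
  ultimately have "a \<le> \<bar>3 * a - 4 * b\<bar>"
    using minimal[of "\<bar>3 * a - 4 * b\<bar>" "\<bar>3 * b - 2 * a\<bar>"] by simp
  moreover have "b\<^sup>2 < a\<^sup>2"
    using ab(3) prime_gt_0_int[OF p] zero_le_power2[of b] by linarith
  then have "b < a"
    using ab by (simp add: power_less_imp_less_base)
  ultimately show ?thesis
    by linarith
qed

lemma zs_ideal_mult: "zs_ideal P \<Longrightarrow> u \<in> P \<Longrightarrow> zs_mult r u \<in> P"
  unfolding zs_ideal_def by blast

lemma zs_ideal_add: "zs_ideal P \<Longrightarrow> u \<in> P \<Longrightarrow> v \<in> P \<Longrightarrow> zs_add u v \<in> P"
  by (simp add: zs_ideal_def)

lemma lies_over_mem_iff: "lies_over P p \<Longrightarrow> (n, 0) \<in> P \<longleftrightarrow> p dvd n"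
  by (auto simp: lies_over_def set_eq_iff)

lemma lies_over_dvd_mult_cnj:
  assumes P: "zs_ideal P" and over: "lies_over P p" and "t \<in> P" and "u \<in> P"
  shows "p dvd fst (zs_mult (zs_cnj t) u)" and "p dvd snd (zs_mult (zs_cnj t) u)"
proof -
  define X Y where "X = fst (zs_mult (zs_cnj t) u)" and "Y = snd (zs_mult (zs_cnj t) u)"
  have "zs_add (zs_mult (snd u, 0) t) (zs_mult (- snd t, 0) u) = (Y, 0)"
    by (simp add: zs_add_def zs_mult_def zs_cnj_def Y_def)
  then show "p dvd Y"
    using assms by (metis lies_over_mem_iff[OF over] zs_ideal_add zs_ideal_mult)
  then have "(Y, 0) \<in> P"
    by (simp add: lies_over_mem_iff[OF over])
  moreover have "zs_add (zs_mult (zs_cnj t) u) (zs_mult (0, -1) (Y, 0)) = (X, 0)"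
    by (simp add: zs_add_def zs_mult_def X_def Y_def)
  ultimately show "p dvd X"
    using assms by (metis lies_over_mem_iff[OF over] zs_ideal_add zs_ideal_mult)
qed

lemma zs_ideal_eq_principal:
  assumes P: "zs_ideal P" and over: "lies_over P p" and t: "t \<in> P" "zs_norm t = p" and "p \<noteq> 0"
  shows "P = range (zs_mult t)"
proof
  show "range (zs_mult t) \<subseteq> P"
  proof
    fix u assume "u \<in> range (zs_mult t)"
    then obtain w where "u = zs_mult w t"
      by (auto simp: zs_mult_comm)
    then show "u \<in> P"
      using P t(1) by (simp add: zs_ideal_mult)
  qed
next
  show "P \<subseteq> range (zs_mult t)"
  proof
    fix u assume u: "u \<in> P"
    obtain X Y where "fst (zs_mult (zs_cnj t) u) = p * X" "snd (zs_mult (zs_cnj t) u) = p * Y"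
      using lies_over_dvd_mult_cnj[OF P over t(1) u] by (meson dvdE)
    then have w: "zs_mult (zs_cnj t) u = zs_mult (p, 0) (X, Y)"
      by (simp add: zs_mult_def prod_eq_iff)
    have "zs_mult (p, 0) u = zs_mult (zs_mult t (zs_cnj t)) u"
      by (simp add: zs_mult_cnj_self t(2))
    also have "\<dots> = zs_mult (p, 0) (zs_mult t (X, Y))"
      by (metis w zs_mult_assoc zs_mult_comm)
    finally have "u = zs_mult t (X, Y)"
      using \<open>p \<noteq> 0\<close> by (simp add: zs_mult_def prod_eq_iff)
    then show "u \<in> range (zs_mult t)"
      by blast
  qed
qed

lemma range_zs_mult_cnj: "range (zs_mult (zs_cnj s)) = zs_cnj ` range (zs_mult s)"
proof (intro equalityI subsetI)
  fix u assume "u \<in> range (zs_mult (zs_cnj s))"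
  then obtain w where "u = zs_mult (zs_cnj s) w"
    by (rule rangeE)
  then have "u = zs_cnj (zs_mult s (zs_cnj w))"
    by (simp add: zs_cnj_mult)
  then show "u \<in> zs_cnj ` range (zs_mult s)"
    by blast
next
  fix u assume "u \<in> zs_cnj ` range (zs_mult s)"
  then obtain w where "u = zs_cnj (zs_mult s w)"
    by blast
  then show "u \<in> range (zs_mult (zs_cnj s))"
    by (simp add: zs_cnj_mult)
qed

lemma three_le_abs_sq_minus_double_sq:
  fixes x y :: int
  assumes "x * y < 0" and "0 < (x + 2 * y) * (x + y)"
  shows "3 \<le> \<bar>x\<^sup>2 - 2 * y\<^sup>2\<bar>"
proof -
  have *: "3 \<le> \<bar>x\<^sup>2 - 2 * y\<^sup>2\<bar>"
    if "x * y < 0" "0 < (x + 2 * y) * (x + y)" "0 < y" for x y :: int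
  proof -
    have x_neg: "x < 0"
      using that by (simp add: mult_less_0_iff)
    from that(2) consider "0 < x + y" | "x + 2 * y < 0"
      by (auto simp: zero_less_mult_iff)
    then show ?thesis
    proof cases
      case 1
      have "(- x)\<^sup>2 \<le> (y - 1)\<^sup>2"
        using 1 x_neg by (intro power_mono) auto
      then have "x\<^sup>2 \<le> y\<^sup>2 - 2 * y + 1"
        by (simp add: power2_diff)
      moreover have "2 * y \<le> y\<^sup>2"
        using 1 x_neg by (simp add: power2_eq_square)
      ultimately show ?thesis
        using that(3) abs_ge_minus_self[of "x\<^sup>2 - 2 * y\<^sup>2"] by linarith
    next
      case 2
      have "(2 * y + 1)\<^sup>2 \<le> (- x)\<^sup>2"
        using 2 that(3) by (intro power_mono) auto
      then have "4 * y\<^sup>2 + 4 * y + 1 \<le> x\<^sup>2"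
        by (simp add: power2_sum power_mult_distrib)
      then show ?thesis
        using that(3) zero_le_power2[of y] abs_ge_self[of "x\<^sup>2 - 2 * y\<^sup>2"] by linarith
    qed
  qed
  show ?thesis
  proof (cases "0 < y")
    case False
    then show ?thesis
      using *[of "- x" "- y"] assms by (simp add: algebra_simps mult_less_0_iff)
  qed (use * assms in blast)
qed

lemma zs_quad_mult_ge_min:
  fixes a b :: int
  assumes "0 < b" and "2 * b \<le> a" and "w \<noteq> (0, 0)"
  shows "min (zs_quad (a, b)) (zs_quad (zs_mult (a, b) (-1, 1))) \<le> zs_quad (zs_mult (a, b) w)"
proof -
  obtain x y where w: "w = (x, y)"
    by force
  consider "0 \<le> x * y" | "x * y < 0" "(x + 2 * y) * (x + y) \<le> 0"
    | "x * y < 0" "0 < (x + 2 * y) * (x + y)"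
    by linarith
  then show ?thesis
  proof cases
    case 1
    then have "zs_quad (a, b) \<le> zs_quad (zs_mult (a, b) w)"
      using assms by (intro zs_quad_le_mult) (simp_all add: w)
    then show ?thesis
      by (simp add: min_le_iff_disj)
  next
    case 2
    have "zs_mult (a, b) w = zs_mult (zs_mult (a, b) (-1, 1)) (x + 2 * y, x + y)"
      by (simp add: w zs_mult_def algebra_simps)
    moreover have "zs_quad (zs_mult (a, b) (-1, 1))
        \<le> zs_quad (zs_mult (zs_mult (a, b) (-1, 1)) (x + 2 * y, x + y))"
    proof (rule zs_quad_le_mult)
      have "(2 * b - a) * (a - b) \<le> 0"
        using assms by (intro mult_nonpos_nonneg) auto
      then show "0 \<le> fst (zs_mult (a, b) (-1, 1)) * snd (zs_mult (a, b) (-1, 1))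
          * (fst (x + 2 * y, x + y) * snd (x + 2 * y, x + y))"
        using 2 by (simp add: zs_mult_def mult_nonpos_nonpos)
      show "(x + 2 * y, x + y) \<noteq> (0, 0)"
      proof
        assume "(x + 2 * y, x + y) = (0, 0)"
        then have "y = 0"
          by simp
        with 2(1) show False
          by simp
      qed
    qed
    ultimately show ?thesis
      by (simp add: min_le_iff_disj)
  next
    case 3
    have "(2 * b)\<^sup>2 \<le> a\<^sup>2"
      using assms by (intro power_mono) auto
    then have "4 * b\<^sup>2 \<le> a\<^sup>2"
      by (simp add: power_mult_distrib)
    moreover have "0 < b\<^sup>2"
      using assms(1) by simp
    ultimately have norm_pos: "0 < zs_norm (a, b)"
      unfolding zs_norm_def fst_conv snd_conv by linarith
    have "zs_quad (a, b) \<le> 3 * zs_norm (a, b)"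
      using \<open>4 * b\<^sup>2 \<le> a\<^sup>2\<close> by (simp add: zs_quad_def zs_norm_def)
    also have "3 * zs_norm (a, b) \<le> \<bar>zs_norm w\<bar> * zs_norm (a, b)"
      using three_le_abs_sq_minus_double_sq[OF 3] norm_pos
      by (intro mult_right_mono) (simp_all add: w zs_norm_def)
    also have "\<dots> = \<bar>zs_norm (zs_mult (a, b) w)\<bar>"
      using norm_pos by (simp add: zs_norm_mult abs_mult)
    also have "\<dots> \<le> zs_quad (zs_mult (a, b) w)"
      by (rule abs_zs_norm_le_zs_quad)
    finally show ?thesis
      by (simp add: min_le_iff_disj)
  qed
qed

lemma lambda1_eqI:
  assumes "u0 \<in> I" and "u0 \<noteq> (0, 0)" and "zs_quad u0 = m"
    and "\<And>u. u \<in> I \<Longrightarrow> u \<noteq> (0, 0) \<Longrightarrow> m \<le> zs_quad u"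
  shows "lambda1 I = sqrt (2 * of_int m)"
  unfolding lambda1_def
proof (rule cInf_eq_minimum)
  have "sqrt (2 * of_int m) = emb_norm u0"
    by (simp add: emb_norm_eq_sqrt_zs_quad assms(3))
  then show "sqrt (2 * of_int m) \<in> {emb_norm u |u. u \<in> I \<and> u \<noteq> (0, 0)}"
    using assms(1,2) by blast
next
  fix x assume "x \<in> {emb_norm u |u. u \<in> I \<and> u \<noteq> (0, 0)}"
  then show "sqrt (2 * of_int m) \<le> x"
    using assms(4) by (auto simp: emb_norm_eq_sqrt_zs_quad)
qed

lemma lambda1_principal:
  fixes a b :: int
  assumes "0 < b" and "2 * b \<le> a"
  shows "lambda1 (range (zs_mult (a, b)))
    = sqrt (2 * of_int (min (zs_quad (a, b)) (zs_quad (zs_mult (a, b) (-1, 1)))))"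
proof -
  have lower: "min (zs_quad (a, b)) (zs_quad (zs_mult (a, b) (-1, 1))) \<le> zs_quad u"
    if u_mem: "u \<in> range (zs_mult (a, b))" and u_nz: "u \<noteq> (0, 0)" for u
  proof -
    obtain w where u: "u = zs_mult (a, b) w"
      using u_mem by blast
    then have "w \<noteq> (0, 0)"
      using u_nz by (auto simp: zs_mult_def)
    then show ?thesis
      unfolding u by (rule zs_quad_mult_ge_min[OF assms])
  qed
  show ?thesis
  proof (cases "zs_quad (a, b) \<le> zs_quad (zs_mult (a, b) (-1, 1))")
    case True
    have "(a, b) = zs_mult (a, b) (1, 0)"
      by (simp add: zs_mult_def)
    then have "(a, b) \<in> range (zs_mult (a, b))"
      by (metis rangeI)
    with True show ?thesis
      using assms(1) lower by (intro lambda1_eqI[of "(a, b)"]) (simp_all add: min_def)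
  next
    case False
    have "zs_mult (a, b) (-1, 1) \<noteq> (0, 0)"
      using assms by (simp add: zs_mult_def)
    with False show ?thesis
      using lower by (intro lambda1_eqI[of "zs_mult (a, b) (-1, 1)"]) (simp_all add: min_def)
  qed
qed

lemma lambda1_cnj_image: "lambda1 (zs_cnj ` I) = lambda1 I"
proof -
  have "{emb_norm u |u. u \<in> zs_cnj ` I \<and> u \<noteq> (0, 0)}
      = {emb_norm (zs_cnj v) |v. v \<in> I \<and> zs_cnj v \<noteq> (0, 0)}"
    by blast
  then show ?thesis
    by (simp add: lambda1_def)
qed

lemma sqrt_2_min_zs_quad_eq:
  fixes a b p :: int
  assumes "0 < b" and "a\<^sup>2 - 2 * b\<^sup>2 = p"
  shows "sqrt (2 * of_int (min (zs_quad (a, b)) (zs_quad (zs_mult (a, b) (-1, 1)))))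
    = sqrt 2 * min (sqrt (2 * (of_int a)\<^sup>2 - of_int p))
        (sqrt (6 * (of_int a)\<^sup>2 - 4 * sqrt 2 * of_int a * sqrt ((of_int a)\<^sup>2 - of_int p) - 3 * of_int p))"
proof -
  have "(of_int a)\<^sup>2 - of_int p = (sqrt 2 * of_int b)\<^sup>2"
    by (simp add: power_mult_distrib flip: assms(2))
  then have sqrt_eq: "sqrt ((of_int a)\<^sup>2 - of_int p) = sqrt 2 * of_int b"
    using assms(1) by simp
  have "real_of_int (zs_quad (a, b)) = 2 * (of_int a)\<^sup>2 - of_int p"
    by (simp add: zs_quad_def flip: assms(2))
  moreover have "real_of_int (zs_quad (zs_mult (a, b) (-1, 1)))
      = 6 * (of_int a)\<^sup>2 - 4 * sqrt 2 * of_int a * (sqrt 2 * of_int b) - 3 * of_int p"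
    by (simp add: zs_quad_def zs_mult_def power2_eq_square algebra_simps flip: assms(2))
  moreover have "sqrt (min x y) = min (sqrt x) (sqrt y)" for x y
    by (simp add: min_def)
  ultimately show ?thesis
    unfolding sqrt_eq of_int_min by (simp add: real_sqrt_mult)
qed

lemma a_min_solution:
  fixes p :: int
  assumes "prime p" and "p mod 8 = 1 \<or> p mod 8 = 7"
  shows "\<exists>b > 0. (a_min p)\<^sup>2 - 2 * b\<^sup>2 = p \<and> 2 * b \<le> a_min p"
proof -
  obtain a0 b0 where sol: "0 < a0" "0 < b0" "a0\<^sup>2 - 2 * b0\<^sup>2 = p"
    using prime_eq_sq_minus_double_sq[OF assms] by blast
  obtain b where b: "0 < b" "(a_min p)\<^sup>2 - 2 * b\<^sup>2 = p"
    using a_min_spec(2)[OF sol] by blast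
  have "2 * b \<le> a_min p"
    using minimal_solution_ge_double[OF assms(1) a_min_spec(1)[OF sol] b] a_min_spec(3) by blast
  with b show ?thesis
    by blast
qed

lemma lambda1_prime_ideal_eq:
  assumes P: "zs_prime_ideal P" and over: "lies_over P p" and "p \<noteq> 0"
    and ab: "a\<^sup>2 - 2 * b\<^sup>2 = p"
  shows "lambda1 P = lambda1 (range (zs_mult (a, b)))"
proof -
  have ideal: "zs_ideal P"
    using P by (simp add: zs_prime_ideal_def)
  have "zs_norm (a, b) = p"
    using ab by (simp add: zs_norm_def)
  then have norm: "zs_norm (a, b) = p" "zs_norm (zs_cnj (a, b)) = p"
    by simp_all
  have "zs_mult (a, b) (zs_cnj (a, b)) \<in> P"
    using lies_over_mem_iff[OF over] by (simp add: zs_mult_cnj_self norm)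
  then consider "(a, b) \<in> P" | "zs_cnj (a, b) \<in> P"
    using P unfolding zs_prime_ideal_def by blast
  then show ?thesis
  proof cases
    case 1
    then show ?thesis
      using zs_ideal_eq_principal[OF ideal over 1 norm(1) \<open>p \<noteq> 0\<close>] by simp
  next
    case 2
    then have "P = zs_cnj ` range (zs_mult (a, b))"
      using zs_ideal_eq_principal[OF ideal over 2 norm(2) \<open>p \<noteq> 0\<close>] by (simp only: range_zs_mult_cnj)
    then show ?thesis
      by (simp add: lambda1_cnj_image)
  qed
qed

theorem theorem7:
  fixes p :: int and P :: "zsqrt2 set"
  assumes "prime p"
    and "p mod 8 = 1 \<or> p mod 8 = 7"
    and "zs_prime_ideal P"
    and "lies_over P p"
  shows "lambda1 P = sqrt 2 * min (sqrt (2 * (of_int (a_min p))\<^sup>2 - of_int p))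
           (sqrt (6 * (of_int (a_min p))\<^sup>2 - 4 * sqrt 2 * of_int (a_min p)
                    * sqrt ((of_int (a_min p))\<^sup>2 - of_int p) - 3 * of_int p))"
proof -
  obtain b where b: "0 < b" "(a_min p)\<^sup>2 - 2 * b\<^sup>2 = p" "2 * b \<le> a_min p"
    using a_min_solution[OF assms(1,2)] by blast
  have "p \<noteq> 0"
    using assms(1) by auto
  have "lambda1 P = lambda1 (range (zs_mult (a_min p, b)))"
    using lambda1_prime_ideal_eq[OF assms(3,4) \<open>p \<noteq> 0\<close> b(2)] .
  also have "\<dots> = sqrt (2 * of_int (min (zs_quad (a_min p, b)) (zs_quad (zs_mult (a_min p, b) (-1, 1)))))"
    using lambda1_principal[OF b(1,3)] .
  also have "\<dots> = sqrt 2 * min (sqrt (2 * (of_int (a_min p))\<^sup>2 - of_int p))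
           (sqrt (6 * (of_int (a_min p))\<^sup>2 - 4 * sqrt 2 * of_int (a_min p)
                    * sqrt ((of_int (a_min p))\<^sup>2 - of_int p) - 3 * of_int p))"
    using sqrt_2_min_zs_quad_eq[OF b(1,2)] .
  finally show ?thesis .
qed

end
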